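(* Let $H\in C^\infty(\mathbb{R}^2)$ satisfy (H1') and (H2), let $U\subset\mathbb{R}^2$ be a domain, $\epsilon\in(0,1]$, and let $u^\epsilon\in C^\infty(U)$ solve $\mathscr A_H[u^\epsilon]+\epsilon\operatorname{div}[D_pH(Du^\epsilon)]=0$ in $U$. Then $[H(Du^\epsilon)]^{1/2}$ is locally Lipschitz in $U$, and at every $x\in U$ at which $[H(Du^\epsilon)]^{1/2}$ is differentiable, $$[-\det D^2u^\epsilon][\det D^2_{pp}H(Du^\epsilon)]=4\tilde\tau_H(Du^\epsilon)\langle D^2_{pp}H(Du^\epsilon)D[H(Du^\epsilon)]^{1/2},D[H(Du^\epsilon)]^{1/2}\rangle+\tilde\tau_H(Du^\epsilon)\frac{\epsilon(\operatorname{div}[D_pH(Du^\epsilon)])^2}{H(Du^\epsilon)}.$$ In particular $-\det D^2u^\epsilon\ge0$ in $U$.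
   Context: (H2): $H(0)=\min_{p}H(p)=0$. For $R\ge0$, $\lambda_H(R):=\sup_{\epsilon>0}\sup\{\lambda>0: H-\frac\lambda2|p|^2\text{ convex on }H^{-1}([0,R+\epsilon))\}$, $\Lambda_H(R):=\inf_{\epsilon>0}\inf\{\Lambda>0:\frac\Lambda2|p|^2-H\text{ convex on }H^{-1}([0,R+\epsilon))\}$; $\lambda_H(\infty)=\lim_{R\to\infty}\lambda_H(R)$, $\Lambda_H(\infty)=\lim_{R\to\infty}\Lambda_H(R)$. (H1'): $0<\lambda_H(\infty)\le\Lambda_H(\infty)<\infty$ (i.e. $H$ is strongly convex and strongly concave on $\mathbb{R}^2$). $\mathscr A_H[v]:=\sum_{i,j}H_{p_i}(Dv)H_{p_j}(Dv)v_{x_ix_j}$. $\tilde\tau_H(0)=\frac12$ and $\tilde\tau_H(p)=H(p)/\langle[D^2_{pp}H(p)]^{-1}D_pH(p),D_pH(p)\rangle$ for $p\ne0$. Convention: at points where $D_pH(Du^\epsilon)=0$ (equivalently $Du^\epsilon=0$) the quotient $(\operatorname{div}[D_pH(Du^\epsilon)])^2/H(Du^\epsilon)$ is taken to be $0$. *)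

theory Defs
  imports "HOL-Analysis.Analysis"
begin

definition partial :: "(real^2 \<Rightarrow> real) \<Rightarrow> 2 \<Rightarrow> real^2 \<Rightarrow> real" where
  "partial f i x = frechet_derivative f (at x) (axis i 1)"

definition grad :: "(real^2 \<Rightarrow> real) \<Rightarrow> real^2 \<Rightarrow> real^2" where
  "grad f x = (\<chi> i. partial f i x)"

definition hess :: "(real^2 \<Rightarrow> real) \<Rightarrow> real^2 \<Rightarrow> real^2^2" where
  "hess f x = (\<chi> i j. partial (partial f j) i x)"

fun Ck :: "nat \<Rightarrow> (real^2) set \<Rightarrow> (real^2 \<Rightarrow> real) \<Rightarrow> bool" where
  "Ck 0 U f = continuous_on U f"
| "Ck (Suc k) U f = (f differentiable_on U \<and> continuous_on U f \<and> (\<forall>i. Ck k U (partial f i)))"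

definition smooth_on :: "(real^2) set \<Rightarrow> (real^2 \<Rightarrow> real) \<Rightarrow> bool" where
  "smooth_on U f = (\<forall>k. Ck k U f)"

definition lambdaH :: "(real^2 \<Rightarrow> real) \<Rightarrow> real \<Rightarrow> ereal" where
  "lambdaH H R = (SUP e\<in>{e. e > 0}. Sup {ereal l | l. l > 0 \<and>
      convex_on {p. 0 \<le> H p \<and> H p < R + e} (\<lambda>p. H p - l / 2 * (norm p)\<^sup>2)})"

definition LambdaH :: "(real^2 \<Rightarrow> real) \<Rightarrow> real \<Rightarrow> ereal" where
  "LambdaH H R = (INF e\<in>{e. e > 0}. Inf {ereal L | L. L > 0 \<and>
      convex_on {p. 0 \<le> H p \<and> H p < R + e} (\<lambda>p. L / 2 * (norm p)\<^sup>2 - H p)})"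

definition H1' :: "(real^2 \<Rightarrow> real) \<Rightarrow> bool" where
  "H1' H = (\<exists>l L. ((\<lambda>R. lambdaH H R) \<longlongrightarrow> l) at_top \<and>
                  ((\<lambda>R. LambdaH H R) \<longlongrightarrow> L) at_top \<and>
                  0 < l \<and> l \<le> L \<and> L < \<infinity>)"

definition H2 :: "(real^2 \<Rightarrow> real) \<Rightarrow> bool" where
  "H2 H = (H 0 = 0 \<and> (\<forall>p. H 0 \<le> H p))"

definition AH :: "(real^2 \<Rightarrow> real) \<Rightarrow> (real^2 \<Rightarrow> real) \<Rightarrow> real^2 \<Rightarrow> real" where
  "AH H v x = (\<Sum>i\<in>UNIV. \<Sum>j\<in>UNIV.
      grad H (grad v x) $ i * grad H (grad v x) $ j * hess v x $ i $ j)"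

definition divDH :: "(real^2 \<Rightarrow> real) \<Rightarrow> (real^2 \<Rightarrow> real) \<Rightarrow> real^2 \<Rightarrow> real" where
  "divDH H v x = (\<Sum>i\<in>UNIV. partial (\<lambda>y. grad H (grad v y) $ i) i x)"

definition tauH :: "(real^2 \<Rightarrow> real) \<Rightarrow> real^2 \<Rightarrow> real" where
  "tauH H p = (if p = 0 then 1/2
     else H p / ((matrix_inv (hess H p) *v grad H p) \<bullet> grad H p))"

definition locally_lipschitz_on :: "(real^2) set \<Rightarrow> (real^2 \<Rightarrow> real) \<Rightarrow> bool" where
  "locally_lipschitz_on U g =
     (\<forall>x\<in>U. \<exists>r>0. \<exists>C. cball x r \<subseteq> U \<and> C-lipschitz_on (cball x r) g)"

end

theory Submission
  imports Defs
begin

text \<open>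
  Write \<open>p = Du\<close>, \<open>M = D\<^sup>2u\<close>, \<open>A = D\<^sup>2H(p)\<close> and \<open>g = DH(p)\<close>. The equation reads
  \<open>\<langle>Mg, g\<rangle> + \<epsilon> tr(AM) = 0\<close>, and where \<open>p \<noteq> 0\<close> the chain rule gives
  \<open>D[H(Du)]\<^sup>1\<^sup>/\<^sup>2 = Mg / (2 H(p)\<^sup>1\<^sup>/\<^sup>2)\<close>. For symmetric \<open>2\<times>2\<close> matrices
  \<open>\<langle>A Mg, Mg\<rangle> - tr(AM) \<langle>Mg, g\<rangle> = - det M \<langle>adj(A) g, g\<rangle>\<close>, so the equation turns this into
  \<open>\<langle>A Mg, Mg\<rangle> + \<epsilon> tr(AM)\<^sup>2 = - det M \<langle>adj(A) g, g\<rangle>\<close>; dividing by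
  \<open>\<langle>adj(A) g, g\<rangle> = det A \<langle>A\<^sup>-\<^sup>1 g, g\<rangle>\<close> gives the identity. By (H1') the Hessian \<open>A\<close> is
  positive definite (only the lower bound \<open>\<lambda>\<^sub>H\<close> of (H1') is used), so both sides have a sign
  and \<open>- det M \<ge> 0\<close>; where \<open>g = 0\<close> the equation forces \<open>tr(AM) = 0\<close> and the same identity
  with any \<open>g \<noteq> 0\<close> gives the sign.

  Where \<open>Du = 0\<close>, the function \<open>H(Du)\<^sup>1\<^sup>/\<^sup>2\<close> attains its minimum \<open>0\<close>, and the quadratic
  growth \<open>\<lambda>/2 |p|\<^sup>2 \<le> H(p)\<close> makes it dominate \<open>|Du|\<close>; so if it is differentiable there,
  \<open>Du\<close> has derivative \<open>0\<close> and \<open>D\<^sup>2u = 0\<close>. Local Lipschitz continuity comes from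
  \<open>H(p) - H(q) \<le> \<langle>DH(p), p - q\<rangle> \<le> C |p| |p - q| \<le> C' H(p)\<^sup>1\<^sup>/\<^sup>2 |p - q|\<close> on bounded sets.
\<close>

section \<open>Derivatives of smooth functions on the plane\<close>

lemma smooth_on_partial: "smooth_on U f \<Longrightarrow> smooth_on U (partial f i)"
  unfolding smooth_on_def by (metis Ck.simps(2))

lemma smooth_on_imp_continuous_on: "smooth_on U f \<Longrightarrow> continuous_on U f"
  unfolding smooth_on_def by (metis Ck.simps(1))

lemma smooth_on_imp_differentiable:
  "smooth_on U f \<Longrightarrow> open U \<Longrightarrow> x \<in> U \<Longrightarrow> f differentiable (at x)"
  unfolding smooth_on_def by (metis Ck.simps(2) differentiable_on_eq_differentiable_at)

lemma Ck_subset: "Ck k U f \<Longrightarrow> V \<subseteq> U \<Longrightarrow> Ck k V f"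
  by (induction k arbitrary: f) (auto intro: continuous_on_subset differentiable_on_subset)

lemma smooth_on_subset: "smooth_on U f \<Longrightarrow> V \<subseteq> U \<Longrightarrow> smooth_on V f"
  unfolding smooth_on_def using Ck_subset by blast

lemma continuous_on_grad: "smooth_on U f \<Longrightarrow> continuous_on U (grad f)"
  unfolding grad_def by (intro continuous_on_vec_lambda smooth_on_imp_continuous_on smooth_on_partial)

lemma vec2_eq_axis: "(h::real^2) = h$1 *\<^sub>R axis 1 1 + h$2 *\<^sub>R axis 2 1"
  by (simp add: vec_eq_iff forall_2 axis_def)

lemma has_derivative_grad:
  assumes "f differentiable (at x)"
  shows "(f has_derivative (\<lambda>h. grad f x \<bullet> h)) (at x)"
proof -
  let ?F = "frechet_derivative f (at x)"
  have F: "(f has_derivative ?F) (at x)"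
    using assms frechet_derivative_works by blast
  have "?F h = grad f x \<bullet> h" for h
  proof -
    have "?F h = ?F (h$1 *\<^sub>R axis 1 1 + h$2 *\<^sub>R axis 2 1)"
      using vec2_eq_axis[of h] by simp
    also have "\<dots> = h$1 * ?F (axis 1 1) + h$2 * ?F (axis 2 1)"
      using has_derivative_linear[OF F] by (simp add: linear_add linear_scale)
    finally show ?thesis
      by (simp add: inner_vec_def sum_2 grad_def partial_def mult.commute)
  qed
  then have "?F = (\<lambda>h. grad f x \<bullet> h)" ..
  with F show ?thesis by simp
qed

lemma partial_eq_of_has_derivative:
  "(f has_derivative f') (at x) \<Longrightarrow> partial f i x = f' (axis i 1)"
  unfolding partial_def using frechet_derivative_at by metis

lemma grad_eq_of_has_derivative:
  assumes "(f has_derivative (\<lambda>h. v \<bullet> h)) (at x)"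
  shows "grad f x = v"
  using assms by (simp add: vec_eq_iff grad_def partial_eq_of_has_derivative inner_axis)

lemma grad_eq_0_if_local_min:
  assumes "f differentiable (at x)" "\<forall>\<^sub>F y in at x. f x \<le> f y"
  shows "grad f x = 0"
proof (rule grad_eq_of_has_derivative)
  have "(\<lambda>h. grad f x \<bullet> h) = (\<lambda>h. 0)"
    using has_derivative_grad[OF assms(1)] assms(2) by (rule has_derivative_local_min)
  then show "(f has_derivative (\<lambda>h. 0 \<bullet> h)) (at x)"
    using has_derivative_grad[OF assms(1)] by simp
qed

lemma has_derivative_grad_vec:
  assumes "smooth_on U f" "open U" "x \<in> U"
  shows "(grad f has_derivative (\<lambda>h. h v* hess f x)) (at x)"
proof -
  have d: "(partial f k has_derivative (\<lambda>h. grad (partial f k) x \<bullet> h)) (at x)" for k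
    using smooth_on_imp_differentiable[OF smooth_on_partial[OF assms(1)] assms(2,3)]
    by (rule has_derivative_grad)
  have "grad f = (\<lambda>y. partial f 1 y *\<^sub>R axis 1 1 + partial f 2 y *\<^sub>R axis 2 1)"
    by (simp add: grad_def fun_eq_iff vec_eq_iff forall_2 axis_def)
  moreover have "((\<lambda>y. partial f 1 y *\<^sub>R axis 1 1 + partial f 2 y *\<^sub>R axis 2 1 :: real^2) has_derivative
      (\<lambda>h. (grad (partial f 1) x \<bullet> h) *\<^sub>R axis 1 1 + (grad (partial f 2) x \<bullet> h) *\<^sub>R axis 2 1)) (at x)"
    by (intro has_derivative_add has_derivative_scaleR_left d)
  moreover have "(grad (partial f 1) x \<bullet> h) *\<^sub>R axis 1 1 + (grad (partial f 2) x \<bullet> h) *\<^sub>R axis 2 1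
      = h v* hess f x" for h
    by (simp add: vec_eq_iff forall_2 axis_def vector_matrix_mult_def inner_vec_def sum_2 hess_def grad_def
        mult.commute)
  ultimately show ?thesis by simp
qed

lemma has_real_derivative_grad_along_line:
  assumes "smooth_on S f" "open S" "p \<in> S"
  shows "((\<lambda>t. grad f (p + t *\<^sub>R v) \<bullet> v) has_real_derivative (hess f p *v v) \<bullet> v) (at 0)"
proof -
  have "((\<lambda>t. p + t *\<^sub>R v) has_derivative (\<lambda>t. t *\<^sub>R v)) (at 0)"
    by (auto intro!: derivative_eq_intros)
  from has_derivative_compose[OF this, of "grad f"] has_derivative_grad_vec[OF assms]
  have "((\<lambda>t. grad f (p + t *\<^sub>R v)) has_derivative (\<lambda>t. (t *\<^sub>R v) v* hess f p)) (at 0)"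
    by simp
  from has_derivative_inner_left[OF this, of v] show ?thesis
    unfolding has_field_derivative_def
    by (rule has_derivative_eq_rhs)
      (simp add: fun_eq_iff scaleR_vector_matrix_assoc dot_lmul_matrix inner_commute[of v "hess f p *v v"])
qed

lemma has_derivative_comp_grad:
  assumes "smooth_on U u" "open U" "x \<in> U" "F differentiable (at (grad u x))"
  shows "((\<lambda>y. F (grad u y)) has_derivative (\<lambda>h. (hess u x *v grad F (grad u x)) \<bullet> h)) (at x)"
proof -
  have "((\<lambda>y. F (grad u y)) has_derivative (\<lambda>h. grad F (grad u x) \<bullet> (h v* hess u x))) (at x)"
    using has_derivative_compose[OF has_derivative_grad_vec[OF assms(1-3)] has_derivative_grad[OF assms(4)]]
    by (simp add: o_def)
  moreover have "grad F (grad u x) \<bullet> (h v* hess u x) = (hess u x *v grad F (grad u x)) \<bullet> h" for h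
    by (metis dot_lmul_matrix inner_commute)
  ultimately show ?thesis by simp
qed

lemma grad_comp_grad:
  assumes "smooth_on U u" "open U" "x \<in> U" "F differentiable (at (grad u x))"
  shows "grad (\<lambda>y. F (grad u y)) x = hess u x *v grad F (grad u x)"
  using has_derivative_comp_grad[OF assms] by (rule grad_eq_of_has_derivative)

lemma grad_sqrt_comp_grad:
  assumes "smooth_on U u" "open U" "x \<in> U" "F differentiable (at (grad u x))"
    and "F (grad u x) > 0"
  shows "grad (\<lambda>y. sqrt (F (grad u y))) x
    = (1 / (2 * sqrt (F (grad u x)))) *\<^sub>R (hess u x *v grad F (grad u x))"
proof (rule grad_eq_of_has_derivative)
  let ?c = "1 / (2 * sqrt (F (grad u x)))" and ?v = "hess u x *v grad F (grad u x)"
  have "((\<lambda>y. sqrt (F (grad u y))) has_derivative (\<lambda>h. (?v \<bullet> h) * (inverse (sqrt (F (grad u x))) / 2))) (at x)"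
    using has_derivative_real_sqrt[OF assms(5) has_derivative_comp_grad[OF assms(1-4)]] by simp
  moreover have "(\<lambda>h. (?v \<bullet> h) * (inverse (sqrt (F (grad u x))) / 2)) = (\<lambda>h. (?c *\<^sub>R ?v) \<bullet> h)"
    by (simp add: fun_eq_iff field_simps)
  ultimately show "((\<lambda>y. sqrt (F (grad u y))) has_derivative (\<lambda>h. (?c *\<^sub>R ?v) \<bullet> h)) (at x)"
    by (simp only:)
qed

lemma has_derivative_zero_if_dominated:
  fixes f :: "'a::real_normed_vector \<Rightarrow> 'b::real_normed_vector" and g :: "'a \<Rightarrow> 'c::real_normed_vector"
  assumes "(g has_derivative (\<lambda>h. 0)) (at x)" "f x = 0" "g x = 0"
    and "\<forall>\<^sub>F y in at x. norm (f y) \<le> c * norm (g y)"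
  shows "(f has_derivative (\<lambda>h. 0)) (at x)"
proof -
  have "((\<lambda>h. norm (g (x + h) - g x - 0) / norm h) \<longlongrightarrow> 0) (at 0)"
    using assms(1) unfolding has_derivative_at by blast
  then have "((\<lambda>h. norm (g (x + h)) / norm h) \<longlongrightarrow> 0) (at 0)"
    using assms(3) by simp
  then have lim: "((\<lambda>h. c * (norm (g (x + h)) / norm h)) \<longlongrightarrow> 0) (at 0)"
    by (rule tendsto_mult_right_zero)
  have "\<forall>\<^sub>F h in at 0. norm (f (h + x)) \<le> c * norm (g (h + x))"
    using assms(4) by (simp only: eventually_at_to_0[where a=x])
  then have "\<forall>\<^sub>F h in at 0. norm (norm (f (x + h) - f x - 0) / norm h) \<le> c * (norm (g (x + h)) / norm h)"
    by eventually_elim (simp add: assms(2) add.commute divide_right_mono)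
  from Lim_null_comparison[OF this lim] show ?thesis
    unfolding has_derivative_at by simp
qed

lemma matrix_eq_0_if_vector_matrix_mult_eq_0:
  fixes M :: "real^2^2"
  assumes "(\<lambda>h. h v* M) = (\<lambda>h. 0)"
  shows "M = 0"
proof -
  have "M $ i $ j = (axis i 1 v* M) $ j" for i j
    using exhaust_2[of i] by (auto simp: vector_matrix_mult_def axis_def sum_2)
  then show ?thesis
    using assms by (simp add: vec_eq_iff fun_eq_iff)
qed

lemma AH_eq_inner: "AH H v x = (hess v x *v grad H (grad v x)) \<bullet> grad H (grad v x)"
  by (simp add: AH_def matrix_vector_mult_def inner_vec_def sum_2 algebra_simps)

lemma divDH_eq_trace:
  assumes "smooth_on UNIV H" "smooth_on U u" "open U" "x \<in> U"
  shows "divDH H u x = trace (hess H (grad u x) ** hess u x)"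
proof -
  have "partial (\<lambda>y. grad H (grad u y) $ i) i x = (hess u x *v grad (partial H i) (grad u x)) $ i" for i
  proof -
    have "partial H i differentiable (at (grad u x))"
      using smooth_on_imp_differentiable[OF smooth_on_partial[OF assms(1)]] by simp
    from grad_comp_grad[OF assms(2-4) this] show ?thesis
      by (simp add: grad_def vec_eq_iff)
  qed
  then show ?thesis
    by (simp add: divDH_def trace_def matrix_matrix_mult_def matrix_vector_mult_def sum_2 hess_def grad_def
        mult.commute)
qed

section \<open>Symmetry of the Hessian\<close>

lemma has_real_derivative_along_axis:
  assumes "f differentiable (at (p + t *\<^sub>R axis i 1))"
  shows "((\<lambda>t. f (p + t *\<^sub>R axis i 1)) has_real_derivative partial f i (p + t *\<^sub>R axis i 1)) (at t)"
proof -
  have "((\<lambda>t. p + t *\<^sub>R axis i 1) has_derivative (\<lambda>t. t *\<^sub>R axis i 1)) (at t)"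
    by (auto intro!: derivative_eq_intros)
  from has_derivative_compose[OF this has_derivative_grad[OF assms]]
  show ?thesis
    unfolding has_field_derivative_def
    by (rule has_derivative_eq_rhs) (simp add: fun_eq_iff inner_axis grad_def)
qed

lemma axis_rectangle_subset_cball:
  assumes "s \<in> {0..\<delta>}" "t \<in> {0..\<delta>}"
  shows "x + s *\<^sub>R axis i 1 + t *\<^sub>R axis j 1 \<in> cball (x::real^2) (2 * \<delta>)"
proof -
  have "dist x (x + s *\<^sub>R axis i 1 + t *\<^sub>R axis j 1) = norm (s *\<^sub>R axis i 1 + t *\<^sub>R axis j (1::real))"
    by (simp add: dist_norm norm_minus_commute add.assoc add.commute)
  also have "\<dots> \<le> norm (s *\<^sub>R axis i (1::real)) + norm (t *\<^sub>R axis j (1::real))"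
    by (rule norm_triangle_ineq)
  finally show ?thesis
    using assms by simp
qed

lemma second_difference_eq_hess:
  assumes f: "smooth_on U f" and U: "open U" and \<delta>: "\<delta> > 0" and sub: "cball x (2 * \<delta>) \<subseteq> U"
  shows "\<exists>z\<in>cball x (2 * \<delta>). f (x + (\<delta> *\<^sub>R axis i 1 + \<delta> *\<^sub>R axis j 1)) + f x
            - (f (x + \<delta> *\<^sub>R axis i 1) + f (x + \<delta> *\<^sub>R axis j 1)) = \<delta>\<^sup>2 * hess f z $ j $ i"
proof -
  define P where "P s t = x + s *\<^sub>R axis i 1 + t *\<^sub>R axis j 1" for s t
  have P_in: "P s t \<in> cball x (2 * \<delta>)" if "s \<in> {0..\<delta>}" "t \<in> {0..\<delta>}" for s t
    unfolding P_def using that by (rule axis_rectangle_subset_cball)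
  have diff: "g differentiable (at (P s t))" if "smooth_on U g" "s \<in> {0..\<delta>}" "t \<in> {0..\<delta>}" for g s t
    using smooth_on_imp_differentiable[OF that(1) U] P_in[OF that(2,3)] sub by blast
  have d1: "DERIV (\<lambda>s. f (P s \<delta>) - f (P s 0)) s :> partial f i (P s \<delta>) - partial f i (P s 0)"
    if "0 \<le> s" "s \<le> \<delta>" for s
    using has_real_derivative_along_axis[of f "x + \<delta> *\<^sub>R axis j 1" s i] diff[OF f, of s \<delta>]
      has_real_derivative_along_axis[of f x s i] diff[OF f, of s 0] that \<delta>
    by (intro DERIV_diff) (simp_all add: P_def add_ac)
  obtain \<sigma> where \<sigma>: "0 < \<sigma>" "\<sigma> < \<delta>"
    "f (P \<delta> \<delta>) - f (P \<delta> 0) - (f (P 0 \<delta>) - f (P 0 0))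
       = (\<delta> - 0) * (partial f i (P \<sigma> \<delta>) - partial f i (P \<sigma> 0))"
    using MVT2[OF \<delta> d1] by blast
  have d2: "DERIV (\<lambda>t. partial f i (P \<sigma> t)) t :> partial (partial f i) j (P \<sigma> t)"
    if "0 \<le> t" "t \<le> \<delta>" for t
    using has_real_derivative_along_axis[of "partial f i" "x + \<sigma> *\<^sub>R axis i 1" t j]
      diff[OF smooth_on_partial[OF f], of \<sigma> t] that \<sigma>
    by (simp add: P_def)
  obtain \<tau> where \<tau>: "0 < \<tau>" "\<tau> < \<delta>"
    "partial f i (P \<sigma> \<delta>) - partial f i (P \<sigma> 0) = (\<delta> - 0) * partial (partial f i) j (P \<sigma> \<tau>)"
    using MVT2[OF \<delta> d2] by blast
  have corners: "P \<delta> \<delta> = x + (\<delta> *\<^sub>R axis i 1 + \<delta> *\<^sub>R axis j 1)" "P \<delta> 0 = x + \<delta> *\<^sub>R axis i 1"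
    "P 0 \<delta> = x + \<delta> *\<^sub>R axis j 1" "P 0 0 = x"
    by (simp_all add: P_def add.assoc)
  show ?thesis
  proof
    show "P \<sigma> \<tau> \<in> cball x (2 * \<delta>)"
      using P_in \<sigma> \<tau> by simp
    show "f (x + (\<delta> *\<^sub>R axis i 1 + \<delta> *\<^sub>R axis j 1)) + f x - (f (x + \<delta> *\<^sub>R axis i 1) + f (x + \<delta> *\<^sub>R axis j 1))
        = \<delta>\<^sup>2 * hess f (P \<sigma> \<tau>) $ j $ i"
      using \<sigma>(3) \<tau>(3) unfolding corners by (simp add: hess_def power2_eq_square)
  qed
qed

lemma isCont_tendsto_values_in_shrinking_cballs:
  assumes "isCont g x" "e \<longlonglongrightarrow> 0" "\<And>n. \<exists>z. z \<in> cball x (e n) \<and> g z = a n"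
  shows "a \<longlonglongrightarrow> g x"
proof -
  from assms(3) have "\<forall>n. \<exists>z. z \<in> cball x (e n) \<and> g z = a n" ..
  from choice[OF this] obtain z where z: "\<forall>n. z n \<in> cball x (e n) \<and> g (z n) = a n"
    by blast
  have "\<forall>\<^sub>F n in sequentially. norm (dist (z n) x) \<le> e n"
    using z by (simp add: dist_commute)
  then have "z \<longlonglongrightarrow> x"
    by (rule tendsto_dist_iff[THEN iffD2, OF Lim_null_comparison[OF _ assms(2)]])
  with assms(1) have "(\<lambda>n. g (z n)) \<longlonglongrightarrow> g x"
    by (rule isCont_tendsto_compose)
  then show ?thesis
    using z by simp
qed

lemma hess_symmetric:
  assumes f: "smooth_on U f" and U: "open U" and x: "x \<in> U"
  shows "hess f x $ i $ j = hess f x $ j $ i"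
proof -
  obtain r where r: "r > 0" "cball x r \<subseteq> U"
    using U x open_contains_cball by blast
  define \<delta> where "\<delta> n = r / 2 * inverse (real (Suc n))" for n
  have \<delta>: "\<delta> n > 0" "cball x (2 * \<delta> n) \<subseteq> U" for n
  proof -
    show "\<delta> n > 0" using r by (simp add: \<delta>_def)
    have "2 * \<delta> n \<le> r" using r by (simp add: \<delta>_def field_simps)
    then show "cball x (2 * \<delta> n) \<subseteq> U" using r(2) by (meson subset_cball order_trans)
  qed
  have \<delta>0: "(\<lambda>n. 2 * \<delta> n) \<longlonglongrightarrow> 0"
    unfolding \<delta>_def using tendsto_mult_right_zero[OF LIMSEQ_inverse_real_of_nat, of r] by simp
  have cont: "isCont (\<lambda>y. hess f y $ k $ l) x" for k l
    unfolding hess_def using smooth_on_imp_continuous_on[OF smooth_on_partial[OF smooth_on_partial[OF f]]] U x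
    by (simp add: continuous_on_eq_continuous_at)
  \<comment> \<open>Both mixed partials are limits of the same second difference quotient.\<close>
  define Q where "Q n = (f (x + (\<delta> n *\<^sub>R axis i 1 + \<delta> n *\<^sub>R axis j 1)) + f x
      - (f (x + \<delta> n *\<^sub>R axis i 1) + f (x + \<delta> n *\<^sub>R axis j 1))) / (\<delta> n)\<^sup>2" for n
  have "Q \<longlonglongrightarrow> hess f x $ j $ i"
  proof (rule isCont_tendsto_values_in_shrinking_cballs[OF cont \<delta>0])
    show "\<exists>z. z \<in> cball x (2 * \<delta> n) \<and> hess f z $ j $ i = Q n" for n
      using second_difference_eq_hess[OF f U \<delta>, of n i j] \<delta>(1)[of n] by (auto simp: Q_def)
  qed
  moreover have "Q \<longlonglongrightarrow> hess f x $ i $ j"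
  proof (rule isCont_tendsto_values_in_shrinking_cballs[OF cont \<delta>0])
    show "\<exists>z. z \<in> cball x (2 * \<delta> n) \<and> hess f z $ i $ j = Q n" for n
      using second_difference_eq_hess[OF f U \<delta>, of n j i] \<delta>(1)[of n] by (auto simp: Q_def add.commute)
  qed
  ultimately show ?thesis
    by (rule LIMSEQ_unique[symmetric])
qed

lemma transpose_hess: "smooth_on U f \<Longrightarrow> open U \<Longrightarrow> x \<in> U \<Longrightarrow> transpose (hess f x) = hess f x"
  using hess_symmetric by (simp add: transpose_def vec_eq_iff)

section \<open>Lipschitz bounds\<close>

lemma lipschitz_on_smooth:
  assumes "smooth_on U f" "open U" "K \<subseteq> U" "compact K" "convex K"
  shows "\<exists>B. B-lipschitz_on K f"
proof -
  have "compact (grad f ` K)"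
    using compact_continuous_image[OF continuous_on_subset[OF continuous_on_grad[OF assms(1)] assms(3)] assms(4)] .
  then have "bounded (grad f ` K)"
    by (rule compact_imp_bounded)
  then obtain B where B: "\<forall>v\<in>grad f ` K. norm v \<le> B"
    unfolding bounded_iff by blast
  have "(max B 0)-lipschitz_on K f"
  proof (rule bounded_derivative_imp_lipschitz[OF _ assms(5)])
    fix y
    assume y: "y \<in> K"
    show "(f has_derivative (\<lambda>h. grad f y \<bullet> h)) (at y within K)"
      using y assms(3) smooth_on_imp_differentiable[OF assms(1,2)]
      by (blast intro: has_derivative_at_withinI[OF has_derivative_grad])
    have "onorm (\<lambda>h. grad f y \<bullet> h) \<le> norm (grad f y)"
      using onorm_inner_right[OF bounded_linear_ident, of "grad f y"] by (simp add: onorm_id)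
    then show "onorm (\<lambda>h. grad f y \<bullet> h) \<le> max B 0"
      using B y by fastforce
  qed simp
  then show ?thesis ..
qed

lemma lipschitz_on_grad:
  assumes "smooth_on U f" "open U" "K \<subseteq> U" "compact K" "convex K"
  shows "\<exists>B. B-lipschitz_on K (grad f)"
proof -
  obtain B1 where B1: "B1-lipschitz_on K (partial f 1)"
    using lipschitz_on_smooth[OF smooth_on_partial[OF assms(1)] assms(2-5)] by blast
  obtain B2 where B2: "B2-lipschitz_on K (partial f 2)"
    using lipschitz_on_smooth[OF smooth_on_partial[OF assms(1)] assms(2-5)] by blast
  have "(B1 + B2)-lipschitz_on K (grad f)"
  proof (rule lipschitz_onI)
    fix y z
    assume "y \<in> K" "z \<in> K"
    have "dist (grad f y) (grad f z) \<le> \<bar>partial f 1 y - partial f 1 z\<bar> + \<bar>partial f 2 y - partial f 2 z\<bar>"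
      using norm_le_l1_cart[of "grad f y - grad f z"] by (simp add: dist_norm sum_2 grad_def)
    also have "\<dots> \<le> B1 * dist y z + B2 * dist y z"
      using lipschitz_onD[OF B1 \<open>y \<in> K\<close> \<open>z \<in> K\<close>] lipschitz_onD[OF B2 \<open>y \<in> K\<close> \<open>z \<in> K\<close>]
      by (simp add: dist_real_def)
    finally show "dist (grad f y) (grad f z) \<le> (B1 + B2) * dist y z"
      by (simp add: algebra_simps)
  qed (use lipschitz_on_nonneg[OF B1] lipschitz_on_nonneg[OF B2] in simp)
  then show ?thesis ..
qed

lemma sqrt_diff_le:
  assumes "0 \<le> a" "0 \<le> b" "0 \<le> d" "a - b \<le> sqrt a * d"
  shows "sqrt a - sqrt b \<le> d"
proof (cases "sqrt a \<le> sqrt b")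
  case False
  then have "sqrt a * (sqrt a - sqrt b) \<le> (sqrt a + sqrt b) * (sqrt a - sqrt b)"
    using assms(2) by (intro mult_right_mono) auto
  also have "\<dots> = a - b"
    using assms(1,2) by (simp add: algebra_simps)
  finally have "sqrt a * (sqrt a - sqrt b) \<le> sqrt a * d"
    using assms(4) by linarith
  then show ?thesis
    using False assms(2) by (simp add: mult_le_cancel_left)
qed (use assms(3) in linarith)

section \<open>Strong convexity\<close>

lemma has_real_derivative_ge_if_slopes_ge:
  fixes \<phi> :: "real \<Rightarrow> real"
  assumes "(\<phi> has_real_derivative D) (at 0)" "\<forall>\<^sub>F t in at_right 0. c \<le> (\<phi> t - \<phi> 0) / t"
  shows "c \<le> D"
proof (rule tendsto_lowerbound[OF _ assms(2)])
  have "((\<lambda>t. (\<phi> t - \<phi> 0) / (t - 0)) \<longlongrightarrow> D) (at_right 0)"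
    using has_field_derivative_iff has_field_derivative_at_within[OF assms(1)] by blast
  then show "((\<lambda>t. (\<phi> t - \<phi> 0) / t) \<longlongrightarrow> D) (at_right 0)"
    by simp
qed simp

lemma convex_on_imp_above_tangent_has_derivative:
  fixes g :: "'a::real_normed_vector \<Rightarrow> real"
  assumes "convex_on S g" "open S" "p \<in> S" "q \<in> S" "(g has_derivative g') (at p)"
  shows "g p + g' (q - p) \<le> g q"
proof -
  define \<phi> where "\<phi> t = - g (p + t *\<^sub>R (q - p))" for t
  have "((\<lambda>t. p + t *\<^sub>R (q - p)) has_derivative (\<lambda>t. t *\<^sub>R (q - p))) (at 0)"
    by (auto intro!: derivative_eq_intros)
  from has_derivative_compose[OF this, of g g'] assms(5)
  have "((\<lambda>t. g (p + t *\<^sub>R (q - p))) has_real_derivative g' (q - p)) (at 0)"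
    unfolding has_field_derivative_def
    by (auto elim!: has_derivative_eq_rhs simp: linear_scale[OF has_derivative_linear[OF assms(5)]])
  then have "(\<phi> has_real_derivative - g' (q - p)) (at 0)"
    unfolding \<phi>_def by (rule DERIV_minus)
  moreover have "\<forall>\<^sub>F t in at_right 0. g p - g q \<le> (\<phi> t - \<phi> 0) / t"
    unfolding eventually_at_right_field
  proof (intro exI[of _ 1] conjI allI impI)
    fix t :: real
    assume t: "0 < t" "t < 1"
    have "g ((1 - t) *\<^sub>R p + t *\<^sub>R q) \<le> (1 - t) * g p + t * g q"
      using assms(1,3,4) t unfolding convex_on_def by auto
    then have "t * (g p - g q) \<le> \<phi> t - \<phi> 0"
      by (simp add: \<phi>_def algebra_simps)
    then show "g p - g q \<le> (\<phi> t - \<phi> 0) / t"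
      using t by (simp add: field_simps)
  qed simp
  ultimately have "g p - g q \<le> - g' (q - p)"
    by (rule has_real_derivative_ge_if_slopes_ge)
  then show ?thesis by simp
qed

definition strongly_convex_on :: "'a::real_inner set \<Rightarrow> real \<Rightarrow> ('a \<Rightarrow> real) \<Rightarrow> bool" where
  "strongly_convex_on S l f \<longleftrightarrow> convex_on S (\<lambda>x. f x - l / 2 * (norm x)\<^sup>2)"

lemma strongly_convex_on_imp_above_tangent:
  fixes f :: "'a::real_inner \<Rightarrow> real"
  assumes "strongly_convex_on S l f" "open S" "p \<in> S" "q \<in> S" "(f has_derivative f') (at p)"
  shows "f p + f' (q - p) + l / 2 * (norm (q - p))\<^sup>2 \<le> f q"
proof -
  have "((\<lambda>x. x \<bullet> x) has_derivative (\<lambda>h. p \<bullet> h + h \<bullet> p)) (at p)"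
    by (rule has_derivative_inner[OF has_derivative_ident has_derivative_ident])
  from has_derivative_diff[OF assms(5) has_derivative_mult_right[OF this, of "l / 2"]]
  have "((\<lambda>x. f x - l / 2 * (x \<bullet> x)) has_derivative (\<lambda>h. f' h - l * (p \<bullet> h))) (at p)"
    by (rule has_derivative_eq_rhs) (simp add: fun_eq_iff inner_commute algebra_simps)
  then have "((\<lambda>x. f x - l / 2 * (norm x)\<^sup>2) has_derivative (\<lambda>h. f' h - l * (p \<bullet> h))) (at p)"
    by (simp add: power2_norm_eq_inner)
  from convex_on_imp_above_tangent_has_derivative[OF assms(1)[unfolded strongly_convex_on_def] assms(2-4) this]
  have "f p - l / 2 * (norm p)\<^sup>2 + (f' (q - p) - l * (p \<bullet> (q - p))) \<le> f q - l / 2 * (norm q)\<^sup>2" .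
  moreover have "l / 2 * (norm (q - p))\<^sup>2 = l / 2 * (norm q)\<^sup>2 - l / 2 * (norm p)\<^sup>2 - l * (p \<bullet> (q - p))"
    by (simp add: power2_norm_eq_inner inner_diff_left inner_diff_right inner_commute algebra_simps)
  ultimately show ?thesis
    by linarith
qed

lemma strongly_convex_on_grad_monotone:
  fixes f :: "real^2 \<Rightarrow> real"
  assumes "strongly_convex_on S l f" "open S" "p \<in> S" "q \<in> S"
    and "f differentiable (at p)" "f differentiable (at q)"
  shows "l * (norm (q - p))\<^sup>2 \<le> (grad f q - grad f p) \<bullet> (q - p)"
  using strongly_convex_on_imp_above_tangent[OF assms(1-4) has_derivative_grad[OF assms(5)]]
    strongly_convex_on_imp_above_tangent[OF assms(1,2,4,3) has_derivative_grad[OF assms(6)]]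
  by (simp add: norm_minus_commute inner_diff_left inner_diff_right algebra_simps)

lemma strongly_convex_on_hess:
  assumes "strongly_convex_on S l f" "smooth_on S f" "open S" "p \<in> S"
  shows "l * (v \<bullet> v) \<le> (hess f p *v v) \<bullet> v"
proof (rule has_real_derivative_ge_if_slopes_ge[OF has_real_derivative_grad_along_line[OF assms(2-4)]])
  let ?\<psi> = "\<lambda>t. grad f (p + t *\<^sub>R v) \<bullet> v"
  have "((\<lambda>t. p + t *\<^sub>R v) \<longlongrightarrow> p) (at_right 0)"
    by (auto intro!: tendsto_eq_intros)
  then have "\<forall>\<^sub>F t in at_right 0. p + t *\<^sub>R v \<in> S"
    using assms(3,4) by (rule topological_tendstoD)
  moreover have "\<forall>\<^sub>F t::real in at_right 0. 0 < t"
    by (rule eventually_at_right_less)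
  ultimately show "\<forall>\<^sub>F t in at_right 0. l * (v \<bullet> v) \<le> (?\<psi> t - ?\<psi> 0) / t"
  proof eventually_elim
    case (elim t)
    have diff: "f differentiable (at y)" if "y \<in> S" for y
      using smooth_on_imp_differentiable[OF assms(2,3) that] .
    have "l * (norm (t *\<^sub>R v))\<^sup>2 \<le> (grad f (p + t *\<^sub>R v) - grad f p) \<bullet> (t *\<^sub>R v)"
      using strongly_convex_on_grad_monotone[OF assms(1,3,4) elim(1) diff[OF assms(4)] diff[OF elim(1)]]
      by simp
    moreover have "(norm (t *\<^sub>R v))\<^sup>2 = t * (t * (v \<bullet> v))"
      by (simp only: power2_norm_eq_inner inner_scaleR_left inner_scaleR_right)
    ultimately have "t * (t * (l * (v \<bullet> v))) \<le> t * (?\<psi> t - ?\<psi> 0)"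
      by (simp add: inner_diff_left algebra_simps)
    then have "t * (l * (v \<bullet> v)) \<le> ?\<psi> t - ?\<psi> 0"
      using elim(2) by (rule mult_left_le_imp_le)
    then show ?case
      using elim(2) by (simp add: pos_le_divide_eq mult.commute)
  qed
qed

section \<open>Symmetric \<open>2\<times>2\<close> matrices\<close>

definition adjugate2 :: "real^2^2 \<Rightarrow> real^2^2" where
  "adjugate2 A = vector [vector [A$2$2, - A$1$2], vector [- A$2$1, A$1$1]]"

lemma matrix_inv_eq:
  fixes A B :: "real^'n^'n"
  assumes "A ** B = mat 1" "B ** A = mat 1"
  shows "matrix_inv A = B"
proof -
  have inv: "A ** matrix_inv A = mat 1 \<and> matrix_inv A ** A = mat 1"
    unfolding matrix_inv_def by (rule someI[of _ B]) (use assms in blast)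
  have "matrix_inv A = matrix_inv A ** (A ** B)"
    by (simp add: assms(1))
  also have "\<dots> = (matrix_inv A ** A) ** B"
    by (simp add: matrix_mul_assoc)
  finally show ?thesis
    using inv by simp
qed

lemma matrix_inv_2:
  fixes A :: "real^2^2"
  assumes "det A \<noteq> 0"
  shows "matrix_inv A = (1 / det A) *\<^sub>R adjugate2 A"
proof (rule matrix_inv_eq)
  have "A ** adjugate2 A = det A *\<^sub>R mat 1" "adjugate2 A ** A = det A *\<^sub>R mat 1"
    by (simp_all add: vec_eq_iff forall_2 matrix_matrix_mult_def sum_2 mat_def adjugate2_def det_2)
  then show "A ** ((1 / det A) *\<^sub>R adjugate2 A) = mat 1" "(1 / det A) *\<^sub>R adjugate2 A ** A = mat 1"
    using assms by (simp_all add: matrix_scalar_ac flip: scalar_matrix_assoc)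
qed

lemma symmetric_matrix2_entry:
  fixes A :: "real^2^2"
  assumes "transpose A = A"
  shows "A$2$1 = A$1$2"
  using arg_cong[of _ _ "\<lambda>X. X$1$2", OF assms] by (simp add: transpose_def)

lemma adjugate2_quadratic_form_identity:
  fixes A M :: "real^2^2" and g :: "real^2"
  assumes "transpose A = A" "transpose M = M"
  shows "(A *v (M *v g)) \<bullet> (M *v g) - trace (A ** M) * ((M *v g) \<bullet> g)
    = - det M * ((adjugate2 A *v g) \<bullet> g)"
  using symmetric_matrix2_entry[OF assms(1)] symmetric_matrix2_entry[OF assms(2)]
  by (simp add: adjugate2_def matrix_vector_mult_def matrix_matrix_mult_def inner_vec_def trace_def
      det_2 sum_2 power2_eq_square algebra_simps)

lemma det_pos_if_coercive:
  fixes A :: "real^2^2"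
  assumes "transpose A = A" "l > 0" "\<forall>v. l * (v \<bullet> v) \<le> (A *v v) \<bullet> v"
  shows "det A > 0"
proof -
  define v :: "real^2" where "v = vector [A$1$2, - A$1$1]"
  have "l * 1 \<le> A$1$1"
    using assms(3)[rule_format, of "axis 1 1"] by (simp add: matrix_vector_mult_def inner_vec_def sum_2 axis_def)
  then have a11: "A$1$1 > 0" using assms(2) by simp
  have "v \<noteq> 0"
    using a11 by (auto simp: v_def vec_eq_iff forall_2)
  then have "0 < l * (v \<bullet> v)"
    using assms(2) by simp
  also have "l * (v \<bullet> v) \<le> A$1$1 * det A"
    using assms(3)[rule_format, of v] symmetric_matrix2_entry[OF assms(1)]
    by (simp add: v_def matrix_vector_mult_def inner_vec_def sum_2 det_2 algebra_simps power2_eq_square)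
  finally show ?thesis
    using a11 zero_less_mult_pos by blast
qed

lemma adjugate2_quadratic_form_pos:
  fixes A :: "real^2^2"
  assumes "l > 0" "\<forall>v. l * (v \<bullet> v) \<le> (A *v v) \<bullet> v" "g \<noteq> 0"
  shows "0 < (adjugate2 A *v g) \<bullet> g"
proof -
  have "0 < l * (g \<bullet> g)"
    using assms(1,3) by simp
  also have "\<dots> \<le> (adjugate2 A *v g) \<bullet> g"
    using assms(2)[rule_format, of "vector [g$2, - g$1]"]
    by (simp add: adjugate2_def matrix_vector_mult_def inner_vec_def sum_2 algebra_simps)
  finally show ?thesis .
qed

lemma neg_det_nonneg_if_trace_sign:
  fixes A M :: "real^2^2" and v :: "real^2"
  assumes "transpose A = A" "transpose M = M" "l > 0" "\<forall>w. l * (w \<bullet> w) \<le> (A *v w) \<bullet> w"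
    and "v \<noteq> 0" "trace (A ** M) * ((M *v v) \<bullet> v) \<le> 0"
  shows "- det M \<ge> 0"
proof -
  have "0 \<le> l * ((M *v v) \<bullet> (M *v v))"
    using assms(3) by simp
  also have "\<dots> \<le> (A *v (M *v v)) \<bullet> (M *v v)"
    using assms(4) by blast
  finally have "0 \<le> - det M * ((adjugate2 A *v v) \<bullet> v)"
    using adjugate2_quadratic_form_identity[OF assms(1,2), of v] assms(6) by linarith
  then show ?thesis
    using adjugate2_quadratic_form_pos[OF assms(3,4,5)] by (auto simp: mult_le_0_iff)
qed

lemma neg_det_mul_det_eq:
  fixes A M :: "real^2^2" and g :: "real^2"
  assumes "transpose A = A" "transpose M = M" "l > 0" "\<forall>w. l * (w \<bullet> w) \<le> (A *v w) \<bullet> w"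
    and "g \<noteq> 0" "h > 0" and pde: "(M *v g) \<bullet> g + \<epsilon> * trace (A ** M) = 0"
  defines "\<tau> \<equiv> h / ((matrix_inv A *v g) \<bullet> g)" and "s \<equiv> (1 / (2 * sqrt h)) *\<^sub>R (M *v g)"
  shows "- det M * det A = 4 * \<tau> * ((A *v s) \<bullet> s) + \<tau> * (\<epsilon> * (trace (A ** M))\<^sup>2 / h)"
proof -
  define K where "K = (adjugate2 A *v g) \<bullet> g"
  have K: "K > 0"
    unfolding K_def by (rule adjugate2_quadratic_form_pos[OF assms(3,4,5)])
  have detA: "det A > 0"
    by (rule det_pos_if_coercive[OF assms(1,3,4)])
  have \<tau>: "\<tau> = h * det A / K"
    using detA by (simp add: \<tau>_def K_def matrix_inv_2 flip: scaleR_matrix_vector_assoc)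
  have q: "(A *v s) \<bullet> s = ((A *v (M *v g)) \<bullet> (M *v g)) / (4 * h)"
    using assms(6) by (simp add: s_def matrix_vector_mult_scaleR power2_eq_square real_sqrt_mult[symmetric])
  have key: "(A *v (M *v g)) \<bullet> (M *v g) + \<epsilon> * (trace (A ** M))\<^sup>2 = - det M * K"
  proof -
    have "(M *v g) \<bullet> g = - \<epsilon> * trace (A ** M)"
      using pde by linarith
    then show ?thesis
      using adjugate2_quadratic_form_identity[OF assms(1,2), of g] unfolding K_def
      by (simp add: power2_eq_square algebra_simps)
  qed
  have "4 * \<tau> * ((A *v s) \<bullet> s) + \<tau> * (\<epsilon> * (trace (A ** M))\<^sup>2 / h)
      = det A / K * ((A *v (M *v g)) \<bullet> (M *v g) + \<epsilon> * (trace (A ** M))\<^sup>2)"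
    using K assms(6) unfolding \<tau> q by (simp add: field_simps)
  also have "\<dots> = - det M * det A"
    using K unfolding key by simp
  finally show ?thesis ..
qed

section \<open>Hamiltonians satisfying (H1') and (H2)\<close>

locale hamiltonian =
  fixes H :: "real^2 \<Rightarrow> real"
  assumes smooth: "smooth_on UNIV H" and strongly_convex: "H1' H" and minimum: "H2 H"
begin

lemma H_0 [simp]: "H 0 = 0" and H_nonneg: "0 \<le> H p"
  using minimum by (auto simp: H2_def)

lemma H_differentiable: "H differentiable (at p)"
  using smooth_on_imp_differentiable[OF smooth] by simp

lemma grad_H_0 [simp]: "grad H 0 = 0"
  by (rule grad_eq_0_if_local_min[OF H_differentiable]) (simp add: H_nonneg)

lemma strongly_convex_on_sublevel_nbhd:
  assumes "0 \<le> R"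
  shows "\<exists>l>0. \<exists>S. open S \<and> 0 \<in> S \<and> {p. H p \<le> R} \<subseteq> S \<and> strongly_convex_on S l H"
proof -
  obtain \<Lambda> where lim: "(lambdaH H \<longlongrightarrow> \<Lambda>) at_top" and "0 < \<Lambda>"
    using strongly_convex unfolding H1'_def by blast
  then have "eventually (\<lambda>R'. 0 < lambdaH H R') at_top"
    by (rule order_tendstoD(1))
  then obtain R' where R': "R' \<ge> R" "0 < lambdaH H R'"
    by (metis eventually_at_top_linorder nle_le)
  then obtain e where e: "e > 0" and "0 < Sup {ereal l | l. l > 0 \<and>
      convex_on {p. 0 \<le> H p \<and> H p < R' + e} (\<lambda>p. H p - l / 2 * (norm p)\<^sup>2)}"
    unfolding lambdaH_def less_SUP_iff by auto
  then obtain l where "l > 0" and cvx: "convex_on {p. 0 \<le> H p \<and> H p < R' + e} (\<lambda>p. H p - l / 2 * (norm p)\<^sup>2)"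
    unfolding less_Sup_iff by auto
  moreover have "{p. 0 \<le> H p \<and> H p < R' + e} = {p. H p < R' + e}"
    using H_nonneg by auto
  moreover have "open {p. H p < R' + e}"
    by (rule open_Collect_less[OF smooth_on_imp_continuous_on[OF smooth] continuous_on_const])
  moreover have "{p. H p \<le> R} \<subseteq> {p. H p < R' + e}" "0 \<in> {p. H p < R' + e}"
    using assms R'(1) e by auto
  ultimately show ?thesis
    unfolding strongly_convex_on_def by (intro exI[of _ l] conjI exI[of _ "{p. H p < R' + e}"]) auto
qed

lemma strongly_convex_on_nbhd:
  "\<exists>l>0. \<exists>S. open S \<and> 0 \<in> S \<and> p \<in> S \<and> strongly_convex_on S l H"
  using strongly_convex_on_sublevel_nbhd[OF H_nonneg[of p]] by blast

lemma norm_le_sqrt_H: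
  assumes "strongly_convex_on S l H" "l > 0" "open S" "0 \<in> S" "q \<in> S"
  shows "norm q \<le> sqrt (2 / l) * sqrt (H q)"
proof -
  have "l / 2 * (norm q)\<^sup>2 \<le> H q"
    using strongly_convex_on_imp_above_tangent[OF assms(1,3,4,5) has_derivative_grad[OF H_differentiable]]
    by simp
  then have "(norm q)\<^sup>2 \<le> 2 / l * H q"
    using assms(2) by (simp add: field_simps)
  then show ?thesis
    by (metis real_sqrt_abs real_sqrt_le_mono real_sqrt_mult abs_norm_cancel)
qed

lemma H_pos:
  assumes "p \<noteq> 0"
  shows "0 < H p"
proof -
  obtain l S where "l > 0" "open S" "0 \<in> S" "p \<in> S" "strongly_convex_on S l H"
    using strongly_convex_on_nbhd by blast
  then have "norm p \<le> sqrt (2 / l) * sqrt (H p)"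
    using norm_le_sqrt_H by blast
  then show ?thesis
    using assms H_nonneg[of p] by (cases "H p = 0") auto
qed

lemma grad_H_nonzero:
  assumes "p \<noteq> 0"
  shows "grad H p \<noteq> 0"
proof
  assume grad: "grad H p = 0"
  obtain l S where "l > 0" "open S" "0 \<in> S" "p \<in> S" "strongly_convex_on S l H"
    using strongly_convex_on_nbhd by blast
  then have "l * (norm (p - 0))\<^sup>2 \<le> (grad H p - grad H 0) \<bullet> (p - 0)"
    using strongly_convex_on_grad_monotone H_differentiable by blast
  then show False
    using grad assms \<open>l > 0\<close> by (simp add: mult_le_0_iff)
qed

lemma hess_H_coercive: "\<exists>l>0. \<forall>v. l * (v \<bullet> v) \<le> (hess H p *v v) \<bullet> v"
  using strongly_convex_on_nbhd[of p] strongly_convex_on_hess[OF _ smooth_on_subset[OF smooth]] by blast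

lemma H_diff_le:
  assumes "strongly_convex_on S l H" "l > 0" "open S" "p \<in> S" "q \<in> S"
  shows "H p - H q \<le> norm (grad H p) * dist p q"
proof -
  have "H p + grad H p \<bullet> (q - p) + l / 2 * (norm (q - p))\<^sup>2 \<le> H q"
    using strongly_convex_on_imp_above_tangent[OF assms(1,3,4,5) has_derivative_grad[OF H_differentiable]] .
  moreover have "0 \<le> l / 2 * (norm (q - p))\<^sup>2"
    using assms(2) by simp
  ultimately have "H p - H q \<le> grad H p \<bullet> (p - q)"
    using inner_diff_right[of "grad H p" q p] inner_diff_right[of "grad H p" p q] by linarith
  also have "\<dots> \<le> norm (grad H p) * dist p q"
    using norm_cauchy_schwarz by (simp add: dist_norm)
  finally show ?thesis .
qed

lemma strongly_convex_on_cball_nbhd: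
  "\<exists>l>0. \<exists>S. open S \<and> 0 \<in> S \<and> cball 0 \<rho> \<subseteq> S \<and> strongly_convex_on S l H"
proof -
  have "bounded (H ` cball 0 \<rho>)"
    by (intro compact_imp_bounded compact_continuous_image compact_cball
        continuous_on_subset[OF smooth_on_imp_continuous_on[OF smooth]]) simp
  then obtain R where R: "\<forall>v\<in>H ` cball 0 \<rho>. norm v \<le> R"
    unfolding bounded_iff by blast
  then have "cball 0 \<rho> \<subseteq> {p. H p \<le> max R 0}"
    by (force simp: abs_le_iff)
  then show ?thesis
    using strongly_convex_on_sublevel_nbhd[of "max R 0"] by (meson max.cobounded2 order_trans)
qed

lemma lipschitz_on_sqrt_H: "\<exists>C. C-lipschitz_on (cball 0 \<rho>) (\<lambda>p. sqrt (H p))"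
proof -
  obtain l S where l: "l > 0" and S: "open S" "0 \<in> S" and ball_S: "cball 0 \<rho> \<subseteq> S"
    and cvx: "strongly_convex_on S l H"
    using strongly_convex_on_cball_nbhd by blast
  obtain B where B: "B-lipschitz_on (cball 0 \<rho>) (grad H)"
    using lipschitz_on_grad[OF smooth open_UNIV _ compact_cball convex_cball] by blast
  define C where "C = B * sqrt (2 / l)"
  have "C \<ge> 0"
    using lipschitz_on_nonneg[OF B] l by (simp add: C_def)
  have one_sided: "sqrt (H p) - sqrt (H q) \<le> C * dist p q" if "p \<in> cball 0 \<rho>" "q \<in> cball 0 \<rho>" for p q
  proof (rule sqrt_diff_le[OF H_nonneg H_nonneg])
    show "0 \<le> C * dist p q"
      using \<open>C \<ge> 0\<close> by simp
    have "0 \<in> cball (0::real^2) \<rho>"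
      using that(1) by simp (meson norm_ge_zero order_trans)
    then have "norm (grad H p) \<le> B * norm p"
      using lipschitz_onD[OF B that(1), of 0] by (simp add: dist_norm)
    also have "\<dots> \<le> B * (sqrt (2 / l) * sqrt (H p))"
      using norm_le_sqrt_H[OF cvx l S(1,2)] ball_S that(1) lipschitz_on_nonneg[OF B]
      by (intro mult_left_mono) auto
    finally have "norm (grad H p) * dist p q \<le> B * (sqrt (2 / l) * sqrt (H p)) * dist p q"
      by (rule mult_right_mono) simp
    also have "\<dots> = sqrt (H p) * (C * dist p q)"
      by (simp add: C_def)
    finally have "norm (grad H p) * dist p q \<le> sqrt (H p) * (C * dist p q)" .
    then show "H p - H q \<le> sqrt (H p) * (C * dist p q)"
      using H_diff_le[OF cvx l S(1)] ball_S that by force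
  qed
  have "C-lipschitz_on (cball 0 \<rho>) (\<lambda>p. sqrt (H p))"
  proof (rule lipschitz_onI)
    fix p q :: "real^2"
    assume "p \<in> cball 0 \<rho>" "q \<in> cball 0 \<rho>"
    then show "dist (sqrt (H p)) (sqrt (H q)) \<le> C * dist p q"
      using one_sided[of p q] one_sided[of q p] by (simp add: dist_real_def dist_commute abs_le_iff)
  qed fact
  then show ?thesis ..
qed

lemma locally_lipschitz_on_sqrt_H_grad:
  assumes u: "smooth_on U u" "open U"
  shows "locally_lipschitz_on U (\<lambda>x. sqrt (H (grad u x)))"
  unfolding locally_lipschitz_on_def
proof
  fix x
  assume "x \<in> U"
  then obtain r where r: "r > 0" "cball x r \<subseteq> U"
    using u(2) open_contains_cball by blast
  obtain L where L: "L-lipschitz_on (cball x r) (grad u)"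
    using lipschitz_on_grad[OF u r(2) compact_cball convex_cball] by blast
  have "bounded (grad u ` cball x r)"
    by (intro compact_imp_bounded compact_continuous_image compact_cball
        continuous_on_subset[OF continuous_on_grad[OF u(1)] r(2)])
  then obtain \<rho> where "grad u ` cball x r \<subseteq> ball 0 \<rho>"
    using bounded_subset_ballD by blast
  then have \<rho>: "grad u ` cball x r \<subseteq> cball 0 \<rho>"
    using ball_subset_cball by (rule order_trans)
  obtain C where C: "C-lipschitz_on (cball 0 \<rho>) (\<lambda>p. sqrt (H p))"
    using lipschitz_on_sqrt_H by blast
  have "(C * L)-lipschitz_on (cball x r) (\<lambda>y. sqrt (H (grad u y)))"
    using lipschitz_on_compose2[OF L lipschitz_on_subset[OF C \<rho>]] .
  with r show "\<exists>r>0. \<exists>C. cball x r \<subseteq> U \<and> C-lipschitz_on (cball x r) (\<lambda>y. sqrt (H (grad u y)))"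
    by blast
qed

lemma hess_eq_0_if_grad_eq_0:
  assumes u: "smooth_on U u" "open U" "x \<in> U" and grad_0: "grad u x = 0"
    and diff: "(\<lambda>y. sqrt (H (grad u y))) differentiable (at x)"
  shows "grad (\<lambda>y. sqrt (H (grad u y))) x = 0" and "hess u x = 0"
proof -
  let ?g = "\<lambda>y. sqrt (H (grad u y))"
  show g: "grad ?g x = 0"
    by (rule grad_eq_0_if_local_min[OF diff]) (simp add: grad_0 H_nonneg)
  obtain l S where l: "l > 0" "open S" "0 \<in> S" "strongly_convex_on S l H"
    using strongly_convex_on_nbhd by blast
  have grad_u: "(grad u has_derivative (\<lambda>h. h v* hess u x)) (at x)"
    by (rule has_derivative_grad_vec[OF u])
  then have "isCont (grad u) x"
    by (rule has_derivative_continuous)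
  then have "(grad u \<longlongrightarrow> 0) (at x)"
    using grad_0 by (simp add: isCont_def)
  then have "\<forall>\<^sub>F y in at x. grad u y \<in> S"
    using l(2,3) by (rule topological_tendstoD)
  then have dominated: "\<forall>\<^sub>F y in at x. norm (grad u y) \<le> sqrt (2 / l) * norm (?g y)"
    by eventually_elim (use norm_le_sqrt_H[OF l(4,1,2,3)] H_nonneg in simp)
  have "(?g has_derivative (\<lambda>h. 0)) (at x)"
    using has_derivative_grad[OF diff] by (simp add: g)
  then have "(grad u has_derivative (\<lambda>h. 0)) (at x)"
    using has_derivative_zero_if_dominated[OF _ _ _ dominated] grad_0 by simp
  with grad_u have "(\<lambda>h. h v* hess u x) = (\<lambda>h. 0)"
    by (rule has_derivative_unique)
  then show "hess u x = 0"
    by (rule matrix_eq_0_if_vector_matrix_mult_eq_0)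
qed

lemma neg_det_hess_identity:
  assumes u: "smooth_on U u" "open U" "x \<in> U" and pde: "AH H u x + \<epsilon> * divDH H u x = 0"
    and diff: "(\<lambda>y. sqrt (H (grad u y))) differentiable (at x)"
  shows "(- det (hess u x)) * det (hess H (grad u x)) =
    4 * tauH H (grad u x) * ((hess H (grad u x) *v grad (\<lambda>y. sqrt (H (grad u y))) x)
      \<bullet> grad (\<lambda>y. sqrt (H (grad u y))) x)
    + tauH H (grad u x) * (if grad u x = 0 then 0 else \<epsilon> * (divDH H u x)\<^sup>2 / H (grad u x))"
proof (cases "grad u x = 0")
  case True
  with hess_eq_0_if_grad_eq_0[OF u True diff] show ?thesis
    by (simp add: det_2)
next
  case False
  obtain l where "l > 0" "\<forall>v. l * (v \<bullet> v) \<le> (hess H (grad u x) *v v) \<bullet> v"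
    using hess_H_coercive by blast
  from neg_det_mul_det_eq[OF transpose_hess[OF smooth open_UNIV UNIV_I] transpose_hess[OF u] this
      grad_H_nonzero[OF False] H_pos[OF False]]
  show ?thesis
    using pde False
    by (simp add: AH_eq_inner divDH_eq_trace[OF smooth u] tauH_def
        grad_sqrt_comp_grad[OF u H_differentiable H_pos[OF False]])
qed

lemma neg_det_hess_nonneg:
  assumes u: "smooth_on U u" "open U" "x \<in> U"
    and pde: "AH H u x + \<epsilon> * divDH H u x = 0" and "\<epsilon> > 0"
  shows "- det (hess u x) \<ge> 0"
proof -
  let ?A = "hess H (grad u x)" and ?M = "hess u x" and ?g = "grad H (grad u x)"
  have pde': "(?M *v ?g) \<bullet> ?g + \<epsilon> * trace (?A ** ?M) = 0"
    using pde by (simp add: AH_eq_inner divDH_eq_trace[OF smooth u])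
  obtain l where "l > 0" "\<forall>v. l * (v \<bullet> v) \<le> (?A *v v) \<bullet> v"
    using hess_H_coercive by blast
  note sign = neg_det_nonneg_if_trace_sign[OF transpose_hess[OF smooth open_UNIV UNIV_I] transpose_hess[OF u] this]
  show ?thesis
  proof (cases "grad u x = 0")
    case True
    then have "trace (?A ** ?M) = 0"
      using pde' \<open>\<epsilon> > 0\<close> by simp
    then show ?thesis
      by (intro sign[of "axis 1 1"]) (simp_all add: axis_eq_0_iff)
  next
    case False
    have "(?M *v ?g) \<bullet> ?g = - \<epsilon> * trace (?A ** ?M)"
      using pde' by linarith
    then have "trace (?A ** ?M) * ((?M *v ?g) \<bullet> ?g) = - (\<epsilon> * (trace (?A ** ?M))\<^sup>2)"
      by (simp add: power2_eq_square)
    also have "\<dots> \<le> 0"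
      using \<open>\<epsilon> > 0\<close> by simp
    finally show ?thesis
      by (rule sign[OF grad_H_nonzero[OF False]])
  qed
qed

end

theorem theorem2p3:
  fixes H u :: "real^2 \<Rightarrow> real" and U :: "(real^2) set" and \<epsilon> :: real
  assumes "smooth_on UNIV H" and "H1' H" and "H2 H"
    and "open U" and "connected U" and "U \<noteq> {}"
    and "0 < \<epsilon>" and "\<epsilon> \<le> 1"
    and "smooth_on U u"
    and "\<forall>x\<in>U. AH H u x + \<epsilon> * divDH H u x = 0"
  shows "locally_lipschitz_on U (\<lambda>x. sqrt (H (grad u x)))
    \<and> (\<forall>x\<in>U. (\<lambda>y. sqrt (H (grad u y))) differentiable (at x) \<longrightarrow>
        (- det (hess u x)) * det (hess H (grad u x)) =
          4 * tauH H (grad u x) *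
            ((hess H (grad u x) *v grad (\<lambda>y. sqrt (H (grad u y))) x)
               \<bullet> grad (\<lambda>y. sqrt (H (grad u y))) x)
          + tauH H (grad u x) *
            (if grad u x = 0 then 0
             else \<epsilon> * (divDH H u x)\<^sup>2 / H (grad u x)))
    \<and> (\<forall>x\<in>U. - det (hess u x) \<ge> 0)"
proof -
  interpret hamiltonian H
    using assms(1-3) by unfold_locales
  have pde: "AH H u x + \<epsilon> * divDH H u x = 0" if "x \<in> U" for x
    using assms(10) that by blast
  show ?thesis
    using locally_lipschitz_on_sqrt_H_grad[OF assms(9,4)]
      neg_det_hess_identity[OF assms(9,4) _ pde] neg_det_hess_nonneg[OF assms(9,4) _ pde assms(7)]
    by blast
qed

end
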